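(* Let $B$ be a crystal, $b\in B$ and $b_\mu\in B_S$ such that $\mathrm{wt}(b)+\mathrm{wt}(b_\mu)\in P_+$. Then for every $i\in\{1,\dots,n\}$, $\tilde e_ib_\mu\neq0$ implies $\tilde f_ib\ne0$.
   Context: Let $\mathfrak g$ be of type $D_n$, weights $(\lambda_1,\dots,\lambda_n)$ in an orthonormal basis $\epsilon_j$, simple roots $\alpha_j=\epsilon_j-\epsilon_{j+1}$ ($j<n$), $\alpha_n=\epsilon_{n-1}+\epsilon_n$, $P_+$ the dominant integral weights ($\lambda_j\in\frac12\mathbb Z$, $\lambda_j-\lambda_k\in\mathbb Z$, $\lambda_1\ge\dots\ge\lambda_n$, $\lambda_{n-1}+\lambda_n\ge0$). A crystal means a normal crystal whose connected components are Kashiwara crystals $B_\lambda$ of irreducible $U_q(\mathfrak g)$-modules; in particular $\varepsilon_i(b)=\max\{k:\tilde e_i^kb\ne0\}$, $\varphi_i(b)=\max\{k:\tilde f_i^kb\ne0\}$ and $\varphi_i(b)-\varepsilon_i(b)=\langle\mathrm{wt}(b),\alpha_i^\vee\rangle$. The spinor crystal $B_S$: sign vectors $(i_1,\dots,i_n)$ of weight $\frac12\sum i_j\epsilon_j$; for $j<n$, $\tilde f_j$ turns $(i_j,i_{j+1})=(+,-)$ into $(-,+)$ (else $0$), $\tilde e_j$ the reverse; $\tilde f_n$ turns $(i_{n-1},i_n)=(+,+)$ into $(-,-)$ (else $0$), $\tilde e_n$ the reverse. *)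

theory Defs
  imports Complex_Main
begin

text \<open>Type D_n. Weights are functions nat => rat; coordinate j (1 \<le> j \<le> n) is the
coefficient of epsilon_j. Simple roots are indexed by 1..n.\<close>

definition in_weight_lattice :: "nat \<Rightarrow> (nat \<Rightarrow> rat) \<Rightarrow> bool" where
  "in_weight_lattice n w \<longleftrightarrow>
     (\<forall>j. (j < 1 \<or> n < j) \<longrightarrow> w j = 0) \<and>
     (\<forall>j\<in>{1..n}. 2 * w j \<in> \<int>) \<and>
     (\<forall>j\<in>{1..n}. \<forall>k\<in>{1..n}. w j - w k \<in> \<int>)"

definition dominant :: "nat \<Rightarrow> (nat \<Rightarrow> rat) \<Rightarrow> bool" where
  "dominant n w \<longleftrightarrow>
     (\<forall>j\<in>{1..n}. 2 * w j \<in> \<int>) \<and>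
     (\<forall>j\<in>{1..n}. \<forall>k\<in>{1..n}. w j - w k \<in> \<int>) \<and>
     (\<forall>j. 1 \<le> j \<and> j < n \<longrightarrow> w (Suc j) \<le> w j) \<and>
     0 \<le> w (n - 1) + w n"

definition simple_root :: "nat \<Rightarrow> nat \<Rightarrow> nat \<Rightarrow> rat" where
  "simple_root n i = (\<lambda>j. if i < n then (if j = i then 1 else if j = Suc i then -1 else 0)
                         else (if j = n - 1 \<or> j = n then 1 else 0))"

text \<open>Pairing with the simple coroot (type D is simply laced, so alpha^vee = alpha).\<close>
definition coroot_pair :: "nat \<Rightarrow> (nat \<Rightarrow> rat) \<Rightarrow> nat \<Rightarrow> rat" where
  "coroot_pair n w i = (if i < n then w i - w (Suc i) else w (n - 1) + w n)"

text \<open>k-fold application of a partial operator (None plays the role of 0).\<close>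
definition opt_iter :: "('b \<Rightarrow> 'b option) \<Rightarrow> nat \<Rightarrow> 'b \<Rightarrow> 'b option" where
  "opt_iter g k b = ((\<lambda>x. Option.bind x g) ^^ k) (Some b)"

definition str_eps :: "(nat \<Rightarrow> 'b \<Rightarrow> 'b option) \<Rightarrow> nat \<Rightarrow> 'b \<Rightarrow> nat" where
  "str_eps e i b = (GREATEST k. opt_iter (e i) k b \<noteq> None)"

definition str_phi :: "(nat \<Rightarrow> 'b \<Rightarrow> 'b option) \<Rightarrow> nat \<Rightarrow> 'b \<Rightarrow> nat" where
  "str_phi f i b = (GREATEST k. opt_iter (f i) k b \<noteq> None)"

definition normal_crystal ::
  "nat \<Rightarrow> 'b set \<Rightarrow> ('b \<Rightarrow> nat \<Rightarrow> rat) \<Rightarrow> (nat \<Rightarrow> 'b \<Rightarrow> 'b option) \<Rightarrow> (nat \<Rightarrow> 'b \<Rightarrow> 'b option) \<Rightarrow> bool" where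
  "normal_crystal n B wt e f \<longleftrightarrow>
     (\<forall>b\<in>B. in_weight_lattice n (wt b)) \<and>
     (\<forall>i\<in>{1..n}. \<forall>b\<in>B. \<forall>b'.
        (e i b = Some b' \<longleftrightarrow> (b' \<in> B \<and> f i b' = Some b)) \<and>
        (f i b = Some b' \<longrightarrow> b' \<in> B \<and> wt b' = (\<lambda>j. wt b j - simple_root n i j))) \<and>
     (\<forall>i\<in>{1..n}. \<forall>b\<in>B. (\<exists>k. opt_iter (e i) k b = None) \<and> (\<exists>k. opt_iter (f i) k b = None)) \<and>
     (\<forall>i\<in>{1..n}. \<forall>b\<in>B.
        of_nat (str_phi f i b) - of_nat (str_eps e i b) = coroot_pair n (wt b) i)"

text \<open>Spinor crystal B_S: sign vectors of length n (True = +, entry j stored at index j-1).\<close>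
definition spin_set :: "nat \<Rightarrow> bool list set" where
  "spin_set n = {s. length s = n}"

definition spin_wt :: "nat \<Rightarrow> bool list \<Rightarrow> nat \<Rightarrow> rat" where
  "spin_wt n s = (\<lambda>j. if 1 \<le> j \<and> j \<le> n then (if s ! (j - 1) then 1/2 else -1/2) else 0)"

definition spin_e :: "nat \<Rightarrow> nat \<Rightarrow> bool list \<Rightarrow> bool list option" where
  "spin_e n i s =
     (if 1 \<le> i \<and> i < n then
        (if \<not> s ! (i - 1) \<and> s ! i then Some (s[i - 1 := True, i := False]) else None)
      else if i = n then
        (if \<not> s ! (n - 2) \<and> \<not> s ! (n - 1) then Some (s[n - 2 := True, n - 1 := True]) else None)
      else None)"

definition spin_f :: "nat \<Rightarrow> nat \<Rightarrow> bool list \<Rightarrow> bool list option" where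
  "spin_f n i s =
     (if 1 \<le> i \<and> i < n then
        (if s ! (i - 1) \<and> \<not> s ! i then Some (s[i - 1 := False, i := True]) else None)
      else if i = n then
        (if s ! (n - 2) \<and> s ! (n - 1) then Some (s[n - 2 := False, n - 1 := False]) else None)
      else None)"

end

theory Submission
  imports Defs
begin

text \<open>If \<open>\<tilde>e\<^sub>i b\<^sub>\<mu> \<noteq> 0\<close>, the spinor signs at the two positions seen by \<open>\<alpha>\<^sub>i\<close> force
  \<open>\<langle>wt b\<^sub>\<mu>, \<alpha>\<^sub>i\<^sup>\<or>\<rangle> = -1\<close>. Dominance of \<open>wt b + wt b\<^sub>\<mu>\<close> then gives \<open>\<langle>wt b, \<alpha>\<^sub>i\<^sup>\<or>\<rangle> \<ge> 1\<close>,
  so \<open>\<phi>\<^sub>i(b) = \<epsilon>\<^sub>i(b) + \<langle>wt b, \<alpha>\<^sub>i\<^sup>\<or>\<rangle> \<ge> 1\<close> and \<open>\<tilde>f\<^sub>i b \<noteq> 0\<close>.\<close>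

lemma funpow_bind_None:
  fixes g :: "'a \<Rightarrow> 'a option"
  shows "((\<lambda>x. Option.bind x g) ^^ k) None = None"
  by (induction k) simp_all

lemma opt_iter_Suc_None:
  assumes "g b = None"
  shows "opt_iter g (Suc k) b = None"
  using assms unfolding opt_iter_def funpow_Suc_right by (simp add: funpow_bind_None)

lemma str_phi_eq_0:
  assumes "f i b = None"
  shows "str_phi f i b = 0"
proof -
  have "opt_iter (f i) k b \<noteq> None \<longleftrightarrow> k = 0" for k
    using opt_iter_Suc_None[of "f i" b] assms by (cases k) (auto simp: opt_iter_def)
  then show ?thesis
    unfolding str_phi_def by (simp add: Greatest_equality)
qed

lemma normal_crystal_f_ne_None_if_coroot_pair_pos:
  assumes "normal_crystal n B wt e f" and "b \<in> B" and "i \<in> {1..n}"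
    and "coroot_pair n (wt b) i > 0"
  shows "f i b \<noteq> None"
proof
  assume "f i b = None"
  then have "str_phi f i b = 0"
    by (rule str_phi_eq_0)
  moreover have "of_nat (str_phi f i b) - of_nat (str_eps e i b) = coroot_pair n (wt b) i"
    using assms(1-3) unfolding normal_crystal_def by blast
  ultimately show False
    using assms(4) by simp
qed

lemma coroot_pair_add:
  "coroot_pair n (\<lambda>j. v j + w j) i = coroot_pair n v i + coroot_pair n w i"
  by (simp add: coroot_pair_def)

lemma coroot_pair_nonneg_if_dominant:
  assumes "dominant n w" and "i \<in> {1..n}"
  shows "0 \<le> coroot_pair n w i"
  using assms by (auto simp: dominant_def coroot_pair_def)

lemma coroot_pair_spin_wt_if_spin_e:
  assumes "2 \<le> n" and "i \<in> {1..n}" and "spin_e n i s \<noteq> None"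
  shows "coroot_pair n (spin_wt n s) i = -1"
proof (cases "i < n")
  case True
  then have "\<not> s ! (i - 1)" and "s ! i"
    using assms(2,3) by (auto simp: spin_e_def split: if_splits)
  with True assms(2) show ?thesis
    by (simp add: coroot_pair_def spin_wt_def)
next
  case False
  then have "i = n"
    using assms(2) by simp
  moreover have "\<not> s ! (n - 2)" and "\<not> s ! (n - 1)"
    using assms(1,3) \<open>i = n\<close> by (auto simp: spin_e_def split: if_splits)
  moreover have "n - 1 - 1 = n - 2"
    by simp
  ultimately show ?thesis
    using assms(1) by (simp add: coroot_pair_def spin_wt_def)
qed

theorem lemma4p5:
  fixes n :: nat and B :: "'b set" and wt :: "'b \<Rightarrow> nat \<Rightarrow> rat"
    and e f :: "nat \<Rightarrow> 'b \<Rightarrow> 'b option" and b :: 'b and b\<mu> :: "bool list" and i :: nat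
  assumes "2 \<le> n"
    and "normal_crystal n B wt e f"
    and "b \<in> B"
    and "b\<mu> \<in> spin_set n"
    and "dominant n (\<lambda>j. wt b j + spin_wt n b\<mu> j)"
    and "i \<in> {1..n}"
    and "spin_e n i b\<mu> \<noteq> None"
  shows "f i b \<noteq> None"
proof -
  have "0 \<le> coroot_pair n (wt b) i + coroot_pair n (spin_wt n b\<mu>) i"
    using coroot_pair_nonneg_if_dominant[OF assms(5,6)] by (simp add: coroot_pair_add)
  moreover have "coroot_pair n (spin_wt n b\<mu>) i = -1"
    using coroot_pair_spin_wt_if_spin_e[OF assms(1,6,7)] .
  ultimately have "coroot_pair n (wt b) i > 0"
    by simp
  then show ?thesis
    using normal_crystal_f_ne_None_if_coroot_pair_pos[OF assms(2,3,6)] by blast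
qed

end
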